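(* Let $\bm\mu=(\mu_1,\dots,\mu_r)$ be finite positive Borel measures on the unit circle with infinite supports, fix the square-root branch as in the context, let $\bm n\in\mathbb N^r$ be $\phi$-normal for $\bm\mu$, $\tau\in\partial\mathbb D$, and let $X\not\equiv0$ be a $\tau$-invariant paraorthogonal function for $\bm n$. Suppose that for every $\varphi\in[0,2\pi)$, $\bm n$ is $\phi$-normal with respect to the system $\widehat{\bm\mu}$ given by $d\widehat\mu_j(e^{i\theta})=4\sin^2\frac{\theta-\varphi}{2}\,d\mu_j(e^{i\theta})$ $(=-e^{i\varphi}z^{-1}(z-e^{i\varphi})^2d\mu_j(z))$, $j=1,\dots,r$. Then every zero of the polynomial $z^{(|\bm n|+1)/2}X(z)$ on $\partial\mathbb D$ is simple.
   Context: $\partial\mathbb D=\{|z|=1\}$. Fix $t_0\in\mathbb R$ and let $z^{k/2}=|z|^{k/2}\exp(ik\arg_{[t_0,t_0+2\pi)}(z)/2)$, $k\in\mathbb Z$. $|\bm n|=\sum_j n_j$; $\operatorname{span}\{z^p\}_{p=a}^b$ ($b-a\in\mathbb Z$) is the span of $z^a,\dots,z^b$. For a system $\bm\nu$ of measures on $\partial\mathbb D$, $\bm n$ is $\phi$-normal w.r.t. $\bm\nu$ if there is a unique $\phi\in\operatorname{span}\{z^p\}_{p=-|\bm n|/2}^{|\bm n|/2}$ with coefficient of $z^{|\bm n|/2}$ equal to $1$ such that $\int\phi(z)z^{-p}\,d\nu_j(z)=0$ for $p=-n_j/2,\dots,n_j/2-1$, $j=1,\dots,r$. A $\tau$-invariant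 paraorthogonal function for $\bm n$ is any $X\in\operatorname{span}\{z^p\}_{p=-(|\bm n|+1)/2}^{(|\bm n|+1)/2}$ with $X(z)=\tau\overline{X(1/\bar z)}$ and $\int X(z)z^{-p}\,d\mu_j(z)=0$ for $p=-(n_j-1)/2,\dots,(n_j-1)/2$, $j=1,\dots,r$. $z^{(|\bm n|+1)/2}X(z)$ is a polynomial; zeros of $X$ mean zeros of this polynomial. *)

theory Defs
  imports "HOL-Analysis.Analysis" "HOL-Computational_Algebra.Polynomial"
begin

text \<open>Argument of z taken in the window [t0, t0 + 2 pi).\<close>
definition argt :: "real \<Rightarrow> complex \<Rightarrow> real" where
  "argt t0 z = Arg z - 2 * pi * of_int \<lfloor>(Arg z - t0) / (2 * pi)\<rfloor>"

definition halfpow :: "real \<Rightarrow> int \<Rightarrow> complex \<Rightarrow> complex" where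
  "halfpow t0 k z = complex_of_real (cmod z powr (real_of_int k / 2))
      * exp (\<i> * complex_of_real (real_of_int k * argt t0 z / 2))"

text \<open>Element of span{z^p}, p = -N/2, ..., N/2, with coefficient c m at z^((2m-N)/2).\<close>
definition hsum :: "real \<Rightarrow> nat \<Rightarrow> (nat \<Rightarrow> complex) \<Rightarrow> complex \<Rightarrow> complex" where
  "hsum t0 N c = (\<lambda>z. \<Sum>m\<le>N. c m * halfpow t0 (2 * int m - int N) z)"

definition msupport :: "complex measure \<Rightarrow> complex set" where
  "msupport M = {z. \<forall>e>0. emeasure M (ball z e) > 0}"

definition phi_normal :: "real \<Rightarrow> (nat \<Rightarrow> complex measure) \<Rightarrow> nat \<Rightarrow> (nat \<Rightarrow> nat) \<Rightarrow> bool" where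
  "phi_normal t0 \<nu> r n \<longleftrightarrow>
     (let N = (\<Sum>j<r. n j) in
      \<exists>!\<phi>. (\<exists>c. c N = 1 \<and> \<phi> = hsum t0 N c) \<and>
           (\<forall>j<r. \<forall>l<n j. integral\<^sup>L (\<nu> j) (\<lambda>z. \<phi> z * halfpow t0 (int (n j) - 2 * int l) z) = 0))"

definition paraorth :: "real \<Rightarrow> (nat \<Rightarrow> complex measure) \<Rightarrow> nat \<Rightarrow> (nat \<Rightarrow> nat) \<Rightarrow> complex
    \<Rightarrow> (complex \<Rightarrow> complex) \<Rightarrow> bool" where
  "paraorth t0 \<mu> r n \<tau> X \<longleftrightarrow>
     (let N = (\<Sum>j<r. n j) in
      (\<exists>c. X = hsum t0 (N + 1) c) \<and>
      (\<forall>z. z \<noteq> 0 \<longrightarrow> X z = \<tau> * cnj (X (1 / cnj z))) \<and>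
      (\<forall>j<r. \<forall>l<n j. integral\<^sup>L (\<mu> j) (\<lambda>z. X z * halfpow t0 (int (n j) - 1 - 2 * int l) z) = 0))"

end

theory Submission
  imports Defs
begin

(* If z0 = cis phi on the unit circle were a multiple zero of X, then
   X(z) = z^(-1/2) (z - z0)^2 psi(z) with psi in span{z^p}, p = -|n|/2, ..., |n|/2, having zero top
   coefficient. On the circle -(z - z0)^2 / (z z0) = 4 sin^2((theta - phi)/2), so the
   paraorthogonality of X for mu says exactly that psi is orthogonal for the modified system.
   Adding psi to the normalized orthogonal function of that system gives a second one, so
   normality forces psi = 0 and hence X = 0. *)

lemma borel_measurable_Arg [measurable]: "Arg \<in> borel_measurable borel"
proof -
  have Arg_split: "indicator (- \<real>\<^sub>\<le>\<^sub>0) z *\<^sub>R Arg z + indicator (\<real>\<^sub>\<le>\<^sub>0 - {0}) z * pi = Arg z" for z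
  proof (cases "z = 0")
    case False
    then show ?thesis
      using Arg_eq_pi[of z]
      by (auto simp: indicator_def complex_nonpos_Reals_iff complex_eq_iff less_le)
  qed (simp add: Arg_zero)
  have "(\<lambda>z. indicator (- \<real>\<^sub>\<le>\<^sub>0) z *\<^sub>R Arg z) \<in> borel_measurable borel"
    by (intro borel_measurable_continuous_on_indicator continuous_on_Arg) (simp add: borel_open)
  moreover have "indicator (\<real>\<^sub>\<le>\<^sub>0 - {0::complex}) \<in> borel_measurable borel"
    by (intro borel_measurable_indicator) (simp add: borel_closed sets.Diff)
  ultimately have "(\<lambda>z. indicator (- \<real>\<^sub>\<le>\<^sub>0) z *\<^sub>R Arg z + indicator (\<real>\<^sub>\<le>\<^sub>0 - {0}) z * pi)
      \<in> borel_measurable borel"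
    by measurable
  then show ?thesis
    by (simp only: Arg_split)
qed

lemma borel_measurable_halfpow [measurable]: "halfpow t0 k \<in> borel_measurable borel"
  unfolding halfpow_def argt_def by measurable

lemma borel_measurable_hsum [measurable]: "hsum t0 N c \<in> borel_measurable borel"
  unfolding hsum_def by measurable

lemma halfpow_add: "halfpow t0 (a + b) z = halfpow t0 a z * halfpow t0 b z"
proof -
  have "cmod z powr (real_of_int (a + b) / 2)
      = cmod z powr (real_of_int a / 2) * cmod z powr (real_of_int b / 2)"
    by (simp add: add_divide_distrib powr_add)
  moreover have "exp (\<i> * complex_of_real (real_of_int (a + b) * argt t0 z / 2))
      = exp (\<i> * complex_of_real (real_of_int a * argt t0 z / 2))
        * exp (\<i> * complex_of_real (real_of_int b * argt t0 z / 2))"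
    by (simp add: exp_add[symmetric] algebra_simps add_divide_distrib)
  ultimately show ?thesis
    by (simp add: halfpow_def)
qed

lemma halfpow_eq_0_iff [simp]: "halfpow t0 k z = 0 \<longleftrightarrow> z = 0"
  by (simp add: halfpow_def)

lemma halfpow_0 [simp]: "z \<noteq> 0 \<Longrightarrow> halfpow t0 0 z = 1"
  by (simp add: halfpow_def)

lemma norm_halfpow: "cmod z = 1 \<Longrightarrow> cmod (halfpow t0 k z) = 1"
  by (simp add: halfpow_def norm_mult)

(* The branch window changes the argument only by a multiple of 2 pi, which whole powers do not see. *)
lemma halfpow_2 [simp]: "halfpow t0 2 z = z"
proof -
  define k where "k = \<lfloor>(Arg z - t0) / (2 * pi)\<rfloor>"
  have "exp (\<i> * complex_of_real (argt t0 z)) = exp (\<i> * complex_of_real (Arg z)) * exp (- (2 * of_int k * pi) * \<i>)"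
    by (simp add: argt_def k_def exp_add[symmetric] algebra_simps)
  also have "exp (- (2 * of_int k * pi) * \<i>) = 1"
    using exp_integer_2pi[of "- of_int k"] by simp
  finally have "exp (\<i> * complex_of_real (argt t0 z)) = exp (\<i> * complex_of_real (Arg z))"
    by simp
  moreover have "complex_of_real (cmod z) * exp (\<i> * complex_of_real (Arg z)) = z"
    by (metis cis_conv_exp rcis_cmod_Arg rcis_def mult.commute)
  ultimately show ?thesis
    by (simp add: halfpow_def)
qed

lemma halfpow_even: "z \<noteq> 0 \<Longrightarrow> halfpow t0 (2 * int m) z = z ^ m"
proof (induction m)
  case (Suc m)
  then show ?case
    using halfpow_add[of t0 "2 * int m" 2 z] by (simp add: algebra_simps)
qed simp

lemma halfpow_minus_1_squared: "halfpow t0 (-1) z ^ 2 = inverse z"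
proof (cases "z = 0")
  case False
  have "halfpow t0 (-1) z ^ 2 * z = 1"
    using halfpow_add[of t0 "-1" "-1" z] halfpow_add[of t0 "-2" 2 z] False
    by (simp add: power2_eq_square)
  then show ?thesis
    using False by (simp add: field_simps)
qed simp

lemma hsum_eq_halfpow_poly:
  assumes "z \<noteq> 0"
  shows "hsum t0 N c z = halfpow t0 (- int N) z * poly (\<Sum>m\<le>N. monom (c m) m) z"
proof -
  have "halfpow t0 (2 * int m - int N) z = halfpow t0 (- int N) z * z ^ m" for m
    using halfpow_add[of t0 "- int N" "2 * int m" z] halfpow_even[OF assms] by simp
  then show ?thesis
    by (simp add: hsum_def poly_sum poly_monom sum_distrib_left ac_simps)
qed

lemma hsum_at_0 [simp]: "hsum t0 N c 0 = 0"
  by (simp add: hsum_def halfpow_def)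

lemma hsum_add: "hsum t0 N (\<lambda>m. a m + b m) z = hsum t0 N a z + hsum t0 N b z"
  by (simp add: hsum_def sum.distrib distrib_right)

lemma norm_hsum_le: "cmod z = 1 \<Longrightarrow> cmod (hsum t0 N c z) \<le> (\<Sum>m\<le>N. cmod (c m))"
  unfolding hsum_def using norm_sum[of "\<lambda>m. c m * halfpow t0 (2 * int m - int N) z" "{..N}"]
  by (simp add: norm_mult norm_halfpow)

lemma hsum_double_root_factor:
  assumes "[:- z0, 1:] ^ 2 dvd (\<Sum>m\<le>N + 1. monom (c m) m)"
  obtains d where "d N = 0"
    and "\<And>z. z \<noteq> 0 \<Longrightarrow> hsum t0 (N + 1) c z = halfpow t0 (-1) z * (z - z0)\<^sup>2 * hsum t0 N d z"
proof -
  define P where "P = (\<Sum>m\<le>N + 1. monom (c m) m)"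
  obtain Q where PQ: "P = [:- z0, 1:] ^ 2 * Q"
    using assms unfolding P_def by (elim dvdE)
  have "degree P \<le> N + 1"
    unfolding P_def by (intro degree_sum_le) (auto intro: order.trans[OF degree_monom_le])
  then have degQ: "degree Q < N \<or> Q = 0"
    unfolding PQ by (cases "Q = 0") (simp_all add: degree_mult_eq degree_power_eq)
  then have "coeff Q N = 0"
    by (auto simp: coeff_eq_0)
  moreover have "hsum t0 (N + 1) c z = halfpow t0 (-1) z * (z - z0)\<^sup>2 * hsum t0 N (coeff Q) z"
    if "z \<noteq> 0" for z
  proof -
    have "(\<Sum>m\<le>N. monom (coeff Q m) m) = Q"
      using degQ by (intro poly_as_sum_of_monoms') auto
    then have "hsum t0 N (coeff Q) z = halfpow t0 (- int N) z * poly Q z"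
      using hsum_eq_halfpow_poly[OF that] by simp
    moreover have "hsum t0 (N + 1) c z = halfpow t0 (- int (N + 1)) z * poly P z"
      unfolding P_def by (rule hsum_eq_halfpow_poly[OF that])
    ultimately show ?thesis
      using halfpow_add[of t0 "-1" "- int N" z] by (simp add: PQ)
  qed
  ultimately show ?thesis
    using that by blast
qed

lemma sin_weight_eq:
  assumes "cmod z = 1"
  shows "complex_of_real (4 * (sin ((Arg z - \<phi>) / 2))\<^sup>2) = - (z - cis \<phi>)\<^sup>2 / (z * cis \<phi>)"
proof -
  have "z \<noteq> 0"
    using assms by auto
  then have z: "z = cis (Arg z)"
    using cis_Arg[of z] assms by (simp add: sgn_div_norm)
  have "- (z - cis \<phi>)\<^sup>2 / (z * cis \<phi>) = 2 - z / cis \<phi> - cis \<phi> / z"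
    using \<open>z \<noteq> 0\<close> by (simp add: field_simps power2_eq_square)
  also have "\<dots> = 2 - cis (Arg z - \<phi>) - cis (\<phi> - Arg z)"
    by (subst (1 2) z) (simp add: cis_divide)
  also have "\<dots> = complex_of_real (2 - 2 * cos (Arg z - \<phi>))"
    using cos_minus[of "Arg z - \<phi>"] sin_minus[of "Arg z - \<phi>"] by (simp add: complex_eq_iff)
  also have "2 - 2 * cos (Arg z - \<phi>) = 4 * (sin ((Arg z - \<phi>) / 2))\<^sup>2"
    using cos_double_sin[of "(Arg z - \<phi>) / 2"] by (simp only: mult_2 field_sum_of_halves)
  finally show ?thesis ..
qed

lemma finite_measure_density_bounded:
  fixes g :: "'a \<Rightarrow> real"
  assumes "finite_measure M" and [measurable]: "g \<in> borel_measurable M"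
    and "\<And>x. x \<in> space M \<Longrightarrow> g x \<le> B"
  shows "finite_measure (density M (\<lambda>x. ennreal (g x)))"
proof (rule finite_measureI)
  interpret finite_measure M by fact
  have "emeasure (density M (\<lambda>x. ennreal (g x))) (space M) = (\<integral>\<^sup>+x. ennreal (g x) \<partial>M)"
    by (simp add: emeasure_density nn_integral_set_ennreal[symmetric])
  also have "\<dots> \<le> (\<integral>\<^sup>+x. ennreal B \<partial>M)"
    using assms(3) by (intro nn_integral_mono) (simp add: ennreal_leI)
  also have "\<dots> < \<infinity>"
    by (simp add: ennreal_mult_eq_top_iff less_top[symmetric])
  finally show "emeasure (density M (\<lambda>x. ennreal (g x))) (space (density M (\<lambda>x. ennreal (g x)))) \<noteq> \<infinity>"
    by simp
qed

lemma density_on_circle: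
  fixes g :: "complex \<Rightarrow> real"
  assumes "sets M = sets borel" "finite_measure M" "AE z in M. cmod z = 1"
    and "g \<in> borel_measurable borel" "\<And>z. g z \<le> B"
  shows "sets (density M g) = sets borel" "finite_measure (density M g)"
    "AE z in density M g. cmod z = 1"
proof -
  have g: "g \<in> borel_measurable M"
    using assms(4) by (simp add: measurable_cong_sets[OF assms(1) refl])
  show "sets (density M g) = sets borel"
    using assms(1) by simp
  show "finite_measure (density M g)"
    using finite_measure_density_bounded[OF assms(2) g] assms(5) by blast
  show "AE z in density M g. cmod z = 1"
    using assms(3) g by (auto simp: AE_density elim: AE_mp)
qed

lemma integrable_hsum_halfpow:
  assumes [measurable_cong]: "sets M = sets borel"
    and "finite_measure M" "AE z in M. cmod z = 1"
  shows "integrable M (\<lambda>z. hsum t0 N c z * halfpow t0 k z)"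
proof -
  interpret finite_measure M by fact
  show ?thesis
  proof (rule integrable_const_bound[where B = "\<Sum>m\<le>N. cmod (c m)"])
    show "AE z in M. norm (hsum t0 N c z * halfpow t0 k z) \<le> (\<Sum>m\<le>N. cmod (c m))"
      using assms(3) by eventually_elim (simp add: norm_mult norm_halfpow norm_hsum_le)
  qed measurable
qed

lemma phi_normal_orthogonal_eq_0:
  assumes normal: "phi_normal t0 \<nu> r n"
    and \<nu>: "\<And>j. j < r \<Longrightarrow> sets (\<nu> j) = sets borel" "\<And>j. j < r \<Longrightarrow> finite_measure (\<nu> j)"
      "\<And>j. j < r \<Longrightarrow> AE z in \<nu> j. cmod z = 1"
    and top: "d (\<Sum>j<r. n j) = 0"
    and orth: "\<And>j l. j < r \<Longrightarrow> l < n j \<Longrightarrow>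
      integral\<^sup>L (\<nu> j) (\<lambda>z. hsum t0 (\<Sum>j<r. n j) d z * halfpow t0 (int (n j) - 2 * int l) z) = 0"
  shows "hsum t0 (\<Sum>j<r. n j) d = (\<lambda>_. 0)"
proof -
  define N where "N = (\<Sum>j<r. n j)"
  define orthogonal where "orthogonal \<phi> \<longleftrightarrow> (\<forall>j<r. \<forall>l<n j.
    integral\<^sup>L (\<nu> j) (\<lambda>z. \<phi> z * halfpow t0 (int (n j) - 2 * int l) z) = 0)" for \<phi>
  have "\<exists>!\<phi>. (\<exists>c. c N = 1 \<and> \<phi> = hsum t0 N c) \<and> orthogonal \<phi>"
    using normal by (simp add: phi_normal_def N_def orthogonal_def)
  then obtain c where c: "c N = 1" "orthogonal (hsum t0 N c)"
    and unique: "\<And>c'. c' N = 1 \<Longrightarrow> orthogonal (hsum t0 N c') \<Longrightarrow> hsum t0 N c' = hsum t0 N c"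
    by blast
  have "orthogonal (hsum t0 N (\<lambda>m. c m + d m))"
    unfolding orthogonal_def
  proof (intro allI impI)
    fix j l
    assume "j < r" "l < n j"
    then show "integral\<^sup>L (\<nu> j) (\<lambda>z. hsum t0 N (\<lambda>m. c m + d m) z * halfpow t0 (int (n j) - 2 * int l) z) = 0"
      using c(2) orth integrable_hsum_halfpow[OF \<nu>[OF \<open>j < r\<close>]]
      by (simp add: hsum_add distrib_right orthogonal_def N_def)
  qed
  then have "hsum t0 N (\<lambda>m. c m + d m) = hsum t0 N c"
    using c(1) top by (intro unique) (simp_all add: N_def)
  then show ?thesis
    by (simp add: fun_eq_iff hsum_add N_def)
qed

lemma integral_sin_weight_density:
  assumes [measurable_cong]: "sets M = sets borel"
    and circle: "AE z in M. cmod z = 1"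
    and X: "\<And>z. z \<noteq> 0 \<Longrightarrow> X z = halfpow t0 (-1) z * (z - cis \<phi>)\<^sup>2 * \<psi> z"
    and [measurable]: "X \<in> borel_measurable borel" "\<psi> \<in> borel_measurable borel"
  shows "integral\<^sup>L (density M (\<lambda>z. ennreal (4 * (sin ((Arg z - \<phi>) / 2))\<^sup>2))) (\<lambda>z. \<psi> z * halfpow t0 k z)
    = - inverse (cis \<phi>) * integral\<^sup>L M (\<lambda>z. X z * halfpow t0 (k - 1) z)"
proof -
  have "integral\<^sup>L (density M (\<lambda>z. ennreal (4 * (sin ((Arg z - \<phi>) / 2))\<^sup>2))) (\<lambda>z. \<psi> z * halfpow t0 k z)
      = integral\<^sup>L M (\<lambda>z. (4 * (sin ((Arg z - \<phi>) / 2))\<^sup>2) *\<^sub>R (\<psi> z * halfpow t0 k z))"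
    by (rule integral_density) auto
  also have "\<dots> = integral\<^sup>L M (\<lambda>z. - inverse (cis \<phi>) * (X z * halfpow t0 (k - 1) z))"
  proof (rule integral_cong_AE)
    show "AE z in M. (4 * (sin ((Arg z - \<phi>) / 2))\<^sup>2) *\<^sub>R (\<psi> z * halfpow t0 k z)
        = - inverse (cis \<phi>) * (X z * halfpow t0 (k - 1) z)"
      using circle
    proof eventually_elim
      case (elim z)
      then have "z \<noteq> 0"
        by auto
      have "X z * halfpow t0 (k - 1) z = halfpow t0 (-1) z ^ 2 * (z - cis \<phi>)\<^sup>2 * (\<psi> z * halfpow t0 k z)"
        using X[OF \<open>z \<noteq> 0\<close>] halfpow_add[of t0 k "-1" z] by (simp add: power2_eq_square)
      then show ?case
        unfolding scaleR_conv_of_real sin_weight_eq[OF elim] halfpow_minus_1_squared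
        using \<open>z \<noteq> 0\<close> by (simp add: field_simps)
    qed
  qed measurable
  also have "\<dots> = - inverse (cis \<phi>) * integral\<^sup>L M (\<lambda>z. X z * halfpow t0 (k - 1) z)"
    by (rule integral_mult_right_zero)
  finally show ?thesis .
qed

lemma AE_on_circle:
  assumes "sets M = sets borel" "emeasure M (UNIV - sphere 0 1) = 0"
  shows "AE z in M. cmod z = 1"
  using assms by (intro AE_I[of _ _ "UNIV - sphere 0 1"]) auto

lemma hsum_eq_0_if_poly_eq_0:
  assumes "(\<Sum>m\<le>N. monom (c m) m) = 0"
  shows "hsum t0 N c = (\<lambda>_. 0)"
proof
  show "hsum t0 N c z = 0" for z
    using hsum_eq_halfpow_poly[of z t0 N c] assms by (cases "z = 0") simp_all
qed

lemma hsum_eq_0_if_double_root: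
  assumes borel: "\<And>j. j < r \<Longrightarrow> sets (\<mu> j) = sets borel"
    and fin: "\<And>j. j < r \<Longrightarrow> finite_measure (\<mu> j)"
    and circle: "\<And>j. j < r \<Longrightarrow> AE z in \<mu> j. cmod z = 1"
    and orth: "\<And>j l. j < r \<Longrightarrow> l < n j \<Longrightarrow> integral\<^sup>L (\<mu> j)
      (\<lambda>z. hsum t0 ((\<Sum>j<r. n j) + 1) c z * halfpow t0 (int (n j) - 1 - 2 * int l) z) = 0"
    and normal: "phi_normal t0 (\<lambda>j. density (\<mu> j) (\<lambda>z. ennreal (4 * (sin ((Arg z - \<phi>) / 2))\<^sup>2))) r n"
    and double_root: "[:- cis \<phi>, 1:] ^ 2 dvd (\<Sum>m\<le>(\<Sum>j<r. n j) + 1. monom (c m) m)"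
  shows "hsum t0 ((\<Sum>j<r. n j) + 1) c = (\<lambda>_. 0)"
proof -
  define N where "N = (\<Sum>j<r. n j)"
  define \<nu> where "\<nu> j = density (\<mu> j) (\<lambda>z. ennreal (4 * (sin ((Arg z - \<phi>) / 2))\<^sup>2))" for j
  obtain d where d: "d N = 0" and factor: "\<And>z. z \<noteq> 0 \<Longrightarrow>
      hsum t0 (N + 1) c z = halfpow t0 (-1) z * (z - cis \<phi>)\<^sup>2 * hsum t0 N d z"
    using double_root unfolding N_def by (elim hsum_double_root_factor[where ?t0.0 = t0]) blast
  have \<nu>: "sets (\<nu> j) = sets borel" "finite_measure (\<nu> j)" "AE z in \<nu> j. cmod z = 1" if "j < r" for j
    unfolding \<nu>_def using borel[OF that] fin[OF that] circle[OF that]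
    by (intro density_on_circle[where B = 4] abs_square_le_1[THEN iffD2]; simp)+
  have "integral\<^sup>L (\<nu> j) (\<lambda>z. hsum t0 N d z * halfpow t0 (int (n j) - 2 * int l) z) = 0"
    if "j < r" "l < n j" for j l
    using integral_sin_weight_density[OF borel[OF that(1)] circle[OF that(1)] factor, of "int (n j) - 2 * int l"]
      orth[OF that]
    by (simp add: \<nu>_def N_def algebra_simps)
  then have "hsum t0 N d = (\<lambda>_. 0)"
    using phi_normal_orthogonal_eq_0[OF normal[folded \<nu>_def] \<nu>] d by (simp add: N_def)
  then have "hsum t0 (N + 1) c z = 0" for z
    using factor[of z] by (cases "z = 0") simp_all
  then show ?thesis
    by (simp add: fun_eq_iff N_def)
qed

theorem theorem4p2:
  fixes t0 :: real and \<mu> :: "nat \<Rightarrow> complex measure" and r :: nat and n :: "nat \<Rightarrow> nat"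
    and \<tau> :: complex and X :: "complex \<Rightarrow> complex"
  assumes borel: "\<And>j. j < r \<Longrightarrow> sets (\<mu> j) = sets borel"
    and fin: "\<And>j. j < r \<Longrightarrow> finite_measure (\<mu> j)"
    and circ: "\<And>j. j < r \<Longrightarrow> emeasure (\<mu> j) (UNIV - sphere 0 1) = 0"
    and inf_supp: "\<And>j. j < r \<Longrightarrow> infinite (msupport (\<mu> j))"
    and normal: "phi_normal t0 \<mu> r n"
    and tau: "cmod \<tau> = 1"
    and para: "paraorth t0 \<mu> r n \<tau> X"
    and nonzero: "X \<noteq> (\<lambda>_. 0)"
    and normal_mod: "\<And>\<phi>. 0 \<le> \<phi> \<Longrightarrow> \<phi> < 2 * pi \<Longrightarrow>
        phi_normal t0 (\<lambda>j. density (\<mu> j) (\<lambda>z. ennreal (4 * (sin ((Arg z - \<phi>) / 2))\<^sup>2))) r n"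
  shows "\<forall>c. X = hsum t0 ((\<Sum>j<r. n j) + 1) c \<longrightarrow>
           (\<forall>z. cmod z = 1 \<and> poly (\<Sum>m\<le>(\<Sum>j<r. n j) + 1. monom (c m) m) z = 0 \<longrightarrow>
                order z (\<Sum>m\<le>(\<Sum>j<r. n j) + 1. monom (c m) m) = 1)"
proof (intro allI impI)
  fix c :: "nat \<Rightarrow> complex" and z0 :: complex
  let ?P = "\<Sum>m\<le>(\<Sum>j<r. n j) + 1. monom (c m) m"
  assume X: "X = hsum t0 ((\<Sum>j<r. n j) + 1) c" and z0: "cmod z0 = 1 \<and> poly ?P z0 = 0"
  have "?P \<noteq> 0"
    using hsum_eq_0_if_poly_eq_0 nonzero X by blast
  moreover have "\<not> [:- z0, 1:] ^ 2 dvd ?P"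
  proof
    assume double_root: "[:- z0, 1:] ^ 2 dvd ?P"
    define \<phi> where "\<phi> = Arg2pi z0"
    have z0_cis: "z0 = cis \<phi>"
      using complex_norm_eq_1_exp[of z0] z0 by (simp add: \<phi>_def cis_conv_exp)
    have orth: "\<And>j l. j < r \<Longrightarrow> l < n j \<Longrightarrow> integral\<^sup>L (\<mu> j)
        (\<lambda>z. hsum t0 ((\<Sum>j<r. n j) + 1) c z * halfpow t0 (int (n j) - 1 - 2 * int l) z) = 0"
      using para by (simp add: paraorth_def X)
    have circle: "AE z in \<mu> j. cmod z = 1" if "j < r" for j
      using AE_on_circle borel circ that by blast
    from hsum_eq_0_if_double_root[OF borel fin circle orth
        normal_mod[OF Arg2pi_ge_0[of z0] Arg2pi_lt_2pi[of z0], folded \<phi>_def] double_root[unfolded z0_cis]]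
    have "X = (\<lambda>_. 0)"
      by (simp add: X)
    with nonzero show False ..
  qed
  ultimately show "order z0 ?P = 1"
    using order_root[of ?P z0] order_divides[of z0 2 ?P] z0 by auto
qed

end
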